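(* Let $G_1=(V,D_1)$ and $G_2=(V,D_2)$ be simple directed graphs on the same node set $V$, neither of which is complete. Suppose they have the same out-degree sequence, meaning $|\mathrm{ch}_1(v)|=|\mathrm{ch}_2(v)|$ for every $v\in V$, and that $D_1\neq D_2$. If one of the graphs is acyclic, then there exist $k\in\{1,2\}$, a node $i\in V$, and a set $L$ that is parentally closed with respect to $i$ in $G_k$ such that $|\mathrm{ch}_k(i)\cap L|>|\mathrm{ch}_{3-k}(i)\cap L|$.
   Context: A directed graph $G=(V,D)$ has edge set $D\subseteq V\times V$ of ordered pairs $(i,j)$, $i\neq j$. It is simple if $(i,j)$ and $(j,i)$ are never both in $D$. It is complete if every pair of distinct nodes is adjacent. $\mathrm{ch}_k(i)$ and $\mathrm{pa}_k(i)$ are the children and parents of $i$ in $G_k$, and $\mathrm{ne}_k(i)$ is the set of nodes adjacent to $i$ in $G_k$. For a set $L$ of nodes, $\mathrm{pa}_k(L)=\bigcup_{l\in L}\mathrm{pa}_k(l)$. A subset $L\subseteq\mathrm{ne}_k(i)$ is parentally closed with respect to $i$ in $G_k$ if $\mathrm{pa}_k(L)\cap\mathrm{ne}_k(i)\subseteq L$. *)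

theory Defs
  imports Main
begin

definition digraph :: "'a set \<Rightarrow> ('a \<times> 'a) set \<Rightarrow> bool" where
  "digraph V D \<longleftrightarrow> D \<subseteq> V \<times> V \<and> (\<forall>i j. (i, j) \<in> D \<longrightarrow> i \<noteq> j)"

definition simple_digraph :: "'a set \<Rightarrow> ('a \<times> 'a) set \<Rightarrow> bool" where
  "simple_digraph V D \<longleftrightarrow> digraph V D \<and> (\<forall>i j. (i, j) \<in> D \<longrightarrow> (j, i) \<notin> D)"

definition complete_digraph :: "'a set \<Rightarrow> ('a \<times> 'a) set \<Rightarrow> bool" where
  "complete_digraph V D \<longleftrightarrow> (\<forall>i\<in>V. \<forall>j\<in>V. i \<noteq> j \<longrightarrow> (i, j) \<in> D \<or> (j, i) \<in> D)"

definition ch :: "('a \<times> 'a) set \<Rightarrow> 'a \<Rightarrow> 'a set" where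
  "ch D i = {j. (i, j) \<in> D}"

definition pa :: "('a \<times> 'a) set \<Rightarrow> 'a \<Rightarrow> 'a set" where
  "pa D i = {j. (j, i) \<in> D}"

definition ne :: "('a \<times> 'a) set \<Rightarrow> 'a \<Rightarrow> 'a set" where
  "ne D i = ch D i \<union> pa D i"

definition pa_set :: "('a \<times> 'a) set \<Rightarrow> 'a set \<Rightarrow> 'a set" where
  "pa_set D L = (\<Union>l\<in>L. pa D l)"

definition parentally_closed :: "('a \<times> 'a) set \<Rightarrow> 'a \<Rightarrow> 'a set \<Rightarrow> bool" where
  "parentally_closed D i L \<longleftrightarrow> L \<subseteq> ne D i \<and> pa_set D L \<inter> ne D i \<subseteq> L"

end

theory Submission
  imports Defs
begin

text \<open>Since \<open>D\<^sub>1 \<noteq> D\<^sub>2\<close> and the out-degrees agree, \<open>D\<^sub>1 - D\<^sub>2\<close> is nonempty;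
  it is acyclic as a subgraph of the acyclic \<open>G\<^sub>1\<close>, so it has an edge \<open>(i, j)\<close>
  whose tail \<open>i\<close> has no incoming edge of \<open>D\<^sub>1 - D\<^sub>2\<close>. Take \<open>L = ne\<^sub>1(i)\<close>, which is
  trivially parentally closed. A \<open>G\<^sub>2\<close>-child of \<open>i\<close> in \<open>L\<close> cannot be a \<open>G\<^sub>1\<close>-parent
  of \<open>i\<close> (that edge would lie in \<open>D\<^sub>1 - D\<^sub>2\<close> by simplicity of \<open>G\<^sub>2\<close>), so it is a
  common child; and \<open>j\<close> is a \<open>G\<^sub>1\<close>-child that is not a \<open>G\<^sub>2\<close>-child.\<close>

lemma finite_ch:
  assumes "finite V" and "D \<subseteq> V \<times> V"
  shows "finite (ch D i)"
  using assms by (auto simp: ch_def intro: finite_subset[of _ V])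

lemma eq_if_subset_and_outdegrees_eq:
  assumes "finite V" and "D2 \<subseteq> V \<times> V" and "D1 \<subseteq> D2"
    and "\<forall>v\<in>V. card (ch D1 v) = card (ch D2 v)"
  shows "D1 = D2"
proof
  show "D2 \<subseteq> D1"
  proof
    fix p assume "p \<in> D2"
    then obtain a b where p: "p = (a, b)" and ab: "(a, b) \<in> D2" and "a \<in> V"
      using assms(2) by auto
    have "ch D1 a \<subseteq> ch D2 a"
      using assms(3) by (auto simp: ch_def)
    then have "ch D1 a = ch D2 a"
      using card_subset_eq finite_ch[OF assms(1,2)] assms(4) \<open>a \<in> V\<close> by metis
    with ab p show "p \<in> D1" by (auto simp: ch_def)
  qed
qed (rule assms(3))

lemma parentally_closed_ne: "parentally_closed D i (ne D i)"
  by (simp add: parentally_closed_def)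

lemma acyclic_finite_source_edge:
  assumes "finite R" and "acyclic R" and "R \<noteq> {}"
  obtains i j where "(i, j) \<in> R" and "i \<notin> Range R"
proof -
  have "wf R" using assms(1,2) by (rule finite_acyclic_wf)
  moreover have "Domain R \<noteq> {}" using assms(3) by auto
  ultimately obtain i where i: "i \<in> Domain R" and minimal: "\<And>y. (y, i) \<in> R \<Longrightarrow> y \<notin> Domain R"
    using wfE_min' by metis
  from i obtain j where "(i, j) \<in> R" by blast
  moreover have "i \<notin> Range R" using minimal by blast
  ultimately show thesis by (rule that)
qed

lemma card_ch_ne_less_at_source:
  assumes "finite (ch D1 i)" and asym2: "\<And>x y. (x, y) \<in> D2 \<Longrightarrow> (y, x) \<notin> D2"
    and ij: "(i, j) \<in> D1 - D2" and source: "i \<notin> Range (D1 - D2)"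
  shows "card (ch D2 i \<inter> ne D1 i) < card (ch D1 i \<inter> ne D1 i)"
proof -
  have "ch D2 i \<inter> ne D1 i \<subseteq> ch D1 i \<inter> ch D2 i"
  proof
    fix y assume y: "y \<in> ch D2 i \<inter> ne D1 i"
    then have "(y, i) \<notin> D2" using asym2 by (auto simp: ch_def)
    then have "(y, i) \<notin> D1" using source by blast
    with y show "y \<in> ch D1 i \<inter> ch D2 i" by (auto simp: ne_def ch_def pa_def)
  qed
  moreover have "ch D1 i \<inter> ch D2 i \<subset> ch D1 i"
    using ij by (auto simp: ch_def)
  ultimately have "card (ch D2 i \<inter> ne D1 i) < card (ch D1 i)"
    using assms(1) by (meson card_mono finite_Int le_less_trans psubset_card_mono)
  then show ?thesis by (simp add: ne_def Int_absorb2)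
qed

lemma parentally_closed_child_surplus:
  assumes fin: "finite V"
    and s1: "simple_digraph V D1" and s2: "simple_digraph V D2"
    and deg: "\<forall>v\<in>V. card (ch D1 v) = card (ch D2 v)"
    and "D1 \<noteq> D2" and "acyclic D1"
  shows "\<exists>i\<in>V. \<exists>L. parentally_closed D1 i L \<and> card (ch D1 i \<inter> L) > card (ch D2 i \<inter> L)"
proof -
  have sub1: "D1 \<subseteq> V \<times> V" and sub2: "D2 \<subseteq> V \<times> V"
    using s1 s2 by (auto simp: simple_digraph_def digraph_def)
  have "finite (D1 - D2)"
    using sub1 fin by (meson Diff_subset finite_SigmaI finite_subset)
  moreover have "acyclic (D1 - D2)"
    using \<open>acyclic D1\<close> acyclic_subset by blast
  moreover have "D1 - D2 \<noteq> {}"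
    using eq_if_subset_and_outdegrees_eq[OF fin sub2 _ deg] \<open>D1 \<noteq> D2\<close> by blast
  ultimately obtain i j where ij: "(i, j) \<in> D1 - D2" and source: "i \<notin> Range (D1 - D2)"
    by (rule acyclic_finite_source_edge)
  have asym2: "\<And>x y. (x, y) \<in> D2 \<Longrightarrow> (y, x) \<notin> D2"
    using s2 by (simp add: simple_digraph_def)
  have "card (ch D2 i \<inter> ne D1 i) < card (ch D1 i \<inter> ne D1 i)"
    using finite_ch[OF fin sub1] asym2 ij source by (rule card_ch_ne_less_at_source)
  moreover have "i \<in> V" using ij sub1 by auto
  ultimately show ?thesis using parentally_closed_ne[of D1 i] by blast
qed

theorem theorem4p13:
  fixes V :: "'a set" and D1 D2 :: "('a \<times> 'a) set"
  assumes "finite V"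
    and "simple_digraph V D1" and "simple_digraph V D2"
    and "\<not> complete_digraph V D1" and "\<not> complete_digraph V D2"
    and "\<forall>v\<in>V. card (ch D1 v) = card (ch D2 v)"
    and "D1 \<noteq> D2"
    and "acyclic D1 \<or> acyclic D2"
  shows "(\<exists>i\<in>V. \<exists>L. parentally_closed D1 i L \<and> card (ch D1 i \<inter> L) > card (ch D2 i \<inter> L))
       \<or> (\<exists>i\<in>V. \<exists>L. parentally_closed D2 i L \<and> card (ch D2 i \<inter> L) > card (ch D1 i \<inter> L))"
  using assms(8)
proof
  assume "acyclic D1"
  then show ?thesis
    using parentally_closed_child_surplus[of V D1 D2] assms(1-3,6,7) by blast
next
  assume "acyclic D2"
  then show ?thesis
    using parentally_closed_child_surplus[of V D2 D1] assms(1-3,6,7) by (metis (no_types))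
qed

end
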